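(* A positive semidefinite $d\times d$ matrix $\xi$ is a correlation matrix if and only if $\mathcal P^\dagger(\xi)=I$ for some quantum channel $\mathcal P$ on $S$ satisfying $\mathcal P(\mathsf{St}(S))=\mathsf P(S)$.
   Context: $S$ is a $d$-dimensional quantum system with non-degenerate Hamiltonian $H=\sum_i E_i|i\rangle\langle i|$, $E_1<\dots<E_d$; matrices are written in the eigenbasis $\{|i\rangle\}$. $\mathsf{St}(S)$ is the set of density matrices; $\mathsf P(S)$ is the set of passive states, i.e. states $\sum_i p_i|i\rangle\langle i|$ with $p_1\ge\dots\ge p_d$. A correlation matrix is a positive semidefinite matrix $\xi$ with $\xi_{ii}=1$ for all $i$. $\mathcal P^\dagger$ is the adjoint map: $\mathrm{Tr}[A\mathcal P(B)]=\mathrm{Tr}[\mathcal P^\dagger(A)B]$. *)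

theory Defs
  imports "Jordan_Normal_Form.Matrix"
begin

(* Matrices on a d-dimensional system, written in the energy eigenbasis
   |0>,...,|d-1> (indices 0-based, ordered by increasing energy). *)

definition mtrace :: "complex mat \<Rightarrow> complex" where
  "mtrace A = (\<Sum>i<dim_row A. A $$ (i, i))"

definition psd :: "nat \<Rightarrow> complex mat \<Rightarrow> bool" where
  "psd n A \<longleftrightarrow> A \<in> carrier_mat n n \<and>
     (\<forall>v :: nat \<Rightarrow> complex.
        let q = (\<Sum>i<n. \<Sum>j<n. cnj (v i) * A $$ (i, j) * v j)
        in Im q = 0 \<and> Re q \<ge> 0)"

definition correlation_matrix :: "nat \<Rightarrow> complex mat \<Rightarrow> bool" where
  "correlation_matrix d X \<longleftrightarrow> psd d X \<and> (\<forall>i<d. X $$ (i, i) = 1)"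

definition states :: "nat \<Rightarrow> complex mat set" where
  "states d = {\<rho>. psd d \<rho> \<and> mtrace \<rho> = 1}"

definition passive_states :: "nat \<Rightarrow> complex mat set" where
  "passive_states d = {\<rho>. \<rho> \<in> states d \<and>
      (\<forall>i<d. \<forall>j<d. i \<noteq> j \<longrightarrow> \<rho> $$ (i, j) = 0) \<and>
      (\<forall>i j. i \<le> j \<and> j < d \<longrightarrow> Re (\<rho> $$ (j, j)) \<le> Re (\<rho> $$ (i, i)))}"

definition linear_map_on :: "nat \<Rightarrow> (complex mat \<Rightarrow> complex mat) \<Rightarrow> bool" where
  "linear_map_on d P \<longleftrightarrow>
     (\<forall>A \<in> carrier_mat d d. P A \<in> carrier_mat d d) \<and>
     (\<forall>A \<in> carrier_mat d d. \<forall>B \<in> carrier_mat d d. P (A + B) = P A + P B) \<and>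
     (\<forall>A \<in> carrier_mat d d. \<forall>c. P (c \<cdot>\<^sub>m A) = c \<cdot>\<^sub>m P A)"

(* (P \<otimes> id_n) applied to an (n*d) x (n*d) matrix viewed as an n x n array of
   d x d blocks: block (k,l) is mapped by P *)
definition ampliate :: "nat \<Rightarrow> nat \<Rightarrow> (complex mat \<Rightarrow> complex mat) \<Rightarrow> complex mat \<Rightarrow> complex mat" where
  "ampliate d n P X = mat (n * d) (n * d) (\<lambda>(r, c).
      P (mat d d (\<lambda>(a, b). X $$ ((r div d) * d + a, (c div d) * d + b))) $$ (r mod d, c mod d))"

definition completely_positive :: "nat \<Rightarrow> (complex mat \<Rightarrow> complex mat) \<Rightarrow> bool" where
  "completely_positive d P \<longleftrightarrow>
     (\<forall>n. \<forall>X. psd (n * d) X \<longrightarrow> psd (n * d) (ampliate d n P X))"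

definition trace_preserving :: "nat \<Rightarrow> (complex mat \<Rightarrow> complex mat) \<Rightarrow> bool" where
  "trace_preserving d P \<longleftrightarrow> (\<forall>A \<in> carrier_mat d d. mtrace (P A) = mtrace A)"

definition quantum_channel :: "nat \<Rightarrow> (complex mat \<Rightarrow> complex mat) \<Rightarrow> bool" where
  "quantum_channel d P \<longleftrightarrow> linear_map_on d P \<and> completely_positive d P \<and> trace_preserving d P"

definition is_adjoint :: "nat \<Rightarrow> (complex mat \<Rightarrow> complex mat) \<Rightarrow> (complex mat \<Rightarrow> complex mat) \<Rightarrow> bool" where
  "is_adjoint d P Q \<longleftrightarrow>
     (\<forall>A \<in> carrier_mat d d. Q A \<in> carrier_mat d d) \<and>
     (\<forall>A \<in> carrier_mat d d. \<forall>B \<in> carrier_mat d d. mtrace (A * P B) = mtrace (Q A * B))"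

end

theory Submission
  imports Defs "HOL-Library.Complex_Order"
begin

text \<open>Measuring the energy and, on outcome \<open>k\<close>, preparing the uniform mixture of the \<open>k + 1\<close>
  lowest levels is a channel whose image is exactly the set of passive states: a passive state is
  the mixture of these uniform states weighted by the rescaled gaps between its populations. Its
  adjoint replaces the \<open>i\<close>-th diagonal entry by the mean of the first \<open>i + 1\<close> ones, so it maps
  a matrix with unit diagonal to the identity. Conversely, if some channel \<open>P\<close> onto the passive
  states has an adjoint \<open>Q\<close> with \<open>Q \<xi> = 1\<close>, write the uniform state on the \<open>k + 1\<close> lowest levels
  as \<open>P \<rho>\<close>; then its overlap with \<open>\<xi>\<close> is \<open>Tr (Q \<xi> \<rho>) = 1\<close>, i.e. the first \<open>k + 1\<close>
  diagonal entries of \<open>\<xi>\<close> sum to \<open>k + 1\<close> for every \<open>k\<close>, which forces a unit diagonal.\<close>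

lemma sum_lessThan_mult_split:
  fixes f :: "nat \<Rightarrow> 'a::comm_monoid_add"
  shows "(\<Sum>r<n * d. f r) = (\<Sum>b<n. \<Sum>a<d. f (b * d + a))"
proof -
  have "(\<Sum>r\<in>{b * d..<b * d + d}. f r) = (\<Sum>a<d. f (b * d + a))" for b
    using sum.shift_bounds_nat_ivl[of f 0 "b * d" d]
    by (simp add: lessThan_atLeast0 add.commute)
  then show ?thesis
    by (simp add: sum.nat_group[symmetric])
qed

definition quad_form :: "nat \<Rightarrow> complex mat \<Rightarrow> (nat \<Rightarrow> complex) \<Rightarrow> complex" where
  "quad_form n A v = (\<Sum>i<n. \<Sum>j<n. cnj (v i) * A $$ (i, j) * v j)"

lemma psd_iff_quad_form_nonneg:
  "psd n A \<longleftrightarrow> A \<in> carrier_mat n n \<and> (\<forall>v. 0 \<le> quad_form n A v)"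
  by (auto simp: psd_def quad_form_def Let_def less_eq_complex_def)

lemma psd_diag_nonneg:
  assumes "psd n A" and "i < n"
  shows "0 \<le> A $$ (i, i)"
proof -
  define e where "e j = (if j = i then 1 else 0 :: complex)" for j
  have "quad_form n A e = A $$ (i, i)"
    using assms(2) by (simp add: quad_form_def e_def if_distrib if_distribR sum.If_cases)
  then show ?thesis
    using assms(1) by (metis psd_iff_quad_form_nonneg)
qed

lemma dim_row_mat_diag [simp]: "dim_row (mat_diag d f) = d"
  and dim_col_mat_diag [simp]: "dim_col (mat_diag d f) = d"
  by (simp_all add: mat_diag_def)

lemma index_mat_diag [simp]:
  "i < d \<Longrightarrow> j < d \<Longrightarrow> mat_diag d f $$ (i, j) = (if i = j then f i else 0)"
  by (simp add: mat_diag_def)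

lemma mat_diag_cong: "(\<And>i. i < d \<Longrightarrow> f i = g i) \<Longrightarrow> mat_diag d f = mat_diag d g"
  by (auto simp: mat_diag_def)

lemma mat_eq_mat_diag:
  assumes "A \<in> carrier_mat d d" and "\<And>i j. i < d \<Longrightarrow> j < d \<Longrightarrow> i \<noteq> j \<Longrightarrow> A $$ (i, j) = 0"
  shows "A = mat_diag d (\<lambda>i. A $$ (i, i))"
  using assms by (intro eq_matI) auto

lemma mtrace_mat_diag: "mtrace (mat_diag d f) = (\<Sum>i<d. f i)"
  by (simp add: mtrace_def)

lemma mtrace_mult_mat_diag:
  assumes "A \<in> carrier_mat d d"
  shows "mtrace (A * mat_diag d f) = (\<Sum>i<d. A $$ (i, i) * f i)"
  using assms by (simp add: mtrace_def scalar_prod_def lessThan_atLeast0 if_distrib if_distribR sum.If_cases)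

lemma mtrace_mat_diag_mult:
  assumes "B \<in> carrier_mat d d"
  shows "mtrace (mat_diag d f * B) = (\<Sum>i<d. f i * B $$ (i, i))"
  using assms by (simp add: mtrace_def scalar_prod_def lessThan_atLeast0 if_distrib if_distribR sum.If_cases)

lemma psd_mat_diag_iff: "psd d (mat_diag d f) \<longleftrightarrow> (\<forall>i<d. 0 \<le> f i)"
proof
  assume nonneg: "\<forall>i<d. 0 \<le> f i"
  have "0 \<le> quad_form d (mat_diag d f) v" for v
  proof -
    have "quad_form d (mat_diag d f) v = (\<Sum>i<d. f i * (cnj (v i) * v i))"
      by (simp add: quad_form_def if_distrib if_distribR sum.If_cases ac_simps)
    moreover have "0 \<le> f i * (cnj (v i) * v i)" if "i < d" for i
      using nonneg that by (intro mult_nonneg_nonneg[of "f i"]) (simp_all add: less_eq_complex_def)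
    ultimately show ?thesis
      by (simp only:) (rule sum_nonneg; simp)
  qed
  then show "psd d (mat_diag d f)"
    by (simp add: psd_iff_quad_form_nonneg)
qed (metis index_mat_diag psd_diag_nonneg)

lemma smult_mat_diag: "(a :: 'a::mult_zero) \<cdot>\<^sub>m mat_diag d f = mat_diag d (\<lambda>i. a * f i)"
  by (intro eq_matI) auto

lemma add_mat_diag: "mat_diag d f + mat_diag d g = mat_diag d (\<lambda>i. f i + g i :: 'a::monoid_add)"
  by (intro eq_matI) auto

text \<open>Energy measurement followed by preparation of the diagonal state with populations
  \<open>c _ k\<close> on outcome \<open>k\<close>.\<close>

definition classical_map :: "nat \<Rightarrow> (nat \<Rightarrow> nat \<Rightarrow> complex) \<Rightarrow> complex mat \<Rightarrow> complex mat" where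
  "classical_map d c A = mat_diag d (\<lambda>i. \<Sum>k<d. c i k * A $$ (k, k))"

lemma linear_map_on_classical_map: "linear_map_on d (classical_map d c)"
  unfolding linear_map_on_def classical_map_def
  by (simp add: add_mat_diag smult_mat_diag sum.distrib sum_distrib_left ring_distribs
      mult.left_commute)

lemma mtrace_mult_classical_map:
  assumes "A \<in> carrier_mat d d"
  shows "mtrace (A * classical_map d c B) = (\<Sum>i<d. \<Sum>k<d. A $$ (i, i) * c i k * B $$ (k, k))"
  using assms by (simp add: classical_map_def mtrace_mult_mat_diag sum_distrib_left mult.assoc)

lemma is_adjoint_classical_map: "is_adjoint d (classical_map d c) (classical_map d (\<lambda>i k. c k i))"
  unfolding is_adjoint_def
proof (intro conjI ballI)
  fix A B :: "complex mat"
  assume "A \<in> carrier_mat d d" and "B \<in> carrier_mat d d"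
  then have "mtrace (classical_map d (\<lambda>i k. c k i) A * B) =
      (\<Sum>k<d. \<Sum>i<d. c i k * A $$ (i, i) * B $$ (k, k))"
    by (simp add: classical_map_def mtrace_mat_diag_mult sum_distrib_right)
  also have "\<dots> = (\<Sum>i<d. \<Sum>k<d. A $$ (i, i) * c i k * B $$ (k, k))"
    by (subst sum.swap) (simp add: mult.commute)
  also have "\<dots> = mtrace (A * classical_map d c B)"
    using \<open>A \<in> carrier_mat d d\<close> by (simp add: mtrace_mult_classical_map)
  finally show "mtrace (A * classical_map d c B) = mtrace (classical_map d (\<lambda>i k. c k i) A * B)"
    by simp
qed (simp add: classical_map_def)

lemma trace_preserving_classical_map:
  assumes "\<And>k. k < d \<Longrightarrow> (\<Sum>i<d. c i k) = 1"
  shows "trace_preserving d (classical_map d c)"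
  unfolding trace_preserving_def
proof
  fix A :: "complex mat" assume "A \<in> carrier_mat d d"
  have "mtrace (classical_map d c A) = (\<Sum>i<d. \<Sum>k<d. c i k * A $$ (k, k))"
    by (simp add: classical_map_def mtrace_mat_diag)
  also have "\<dots> = (\<Sum>k<d. (\<Sum>i<d. c i k) * A $$ (k, k))"
    by (subst sum.swap) (simp add: sum_distrib_right)
  also have "\<dots> = mtrace A"
    using \<open>A \<in> carrier_mat d d\<close> assms by (simp add: mtrace_def)
  finally show "mtrace (classical_map d c A) = mtrace A" .
qed

lemma block_index_less:
  fixes a b d n :: nat
  assumes "b < n" and "a < d"
  shows "b * d + a < n * d"
proof -
  have "b * d + a < Suc b * d"
    using assms(2) by simp
  also have "\<dots> \<le> n * d"
    using assms(1) by (intro mult_right_mono) simp_all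
  finally show ?thesis .
qed

lemma index_classical_map:
  "i < d \<Longrightarrow> j < d \<Longrightarrow>
    classical_map d c A $$ (i, j) = (if i = j then \<Sum>k<d. c i k * A $$ (k, k) else 0)"
  by (simp add: classical_map_def)

lemma index_ampliate_classical_map:
  assumes "b < n" "a < d" "b' < n" "a' < d"
  shows "ampliate d n (classical_map d c) X $$ (b * d + a, b' * d + a') =
    (if a = a' then \<Sum>k<d. c a k * X $$ (b * d + k, b' * d + k) else 0)"
proof -
  have "b * d + a < n * d" "b' * d + a' < n * d"
    using assms by (simp_all add: block_index_less)
  then have "ampliate d n (classical_map d c) X $$ (b * d + a, b' * d + a') =
      classical_map d c (mat d d (\<lambda>(k, l). X $$ (b * d + k, b' * d + l))) $$ (a, a')"
    using assms unfolding ampliate_def by simp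
  also have "\<dots> = (if a = a' then \<Sum>k<d. c a k * X $$ (b * d + k, b' * d + k) else 0)"
    using assms by (simp add: index_classical_map)
  finally show ?thesis .
qed

lemma quad_form_blocks:
  "quad_form (n * d) A v = (\<Sum>b<n. \<Sum>a<d. \<Sum>b'<n. \<Sum>a'<d.
     cnj (v (b * d + a)) * A $$ (b * d + a, b' * d + a') * v (b' * d + a'))"
  by (simp add: quad_form_def sum_lessThan_mult_split)

lemma sum_swap_interleaved:
  "(\<Sum>b\<in>B. \<Sum>a\<in>A. \<Sum>b'\<in>B. \<Sum>k\<in>K. f a k b b') = (\<Sum>a\<in>A. \<Sum>k\<in>K. \<Sum>b\<in>B. \<Sum>b'\<in>B. f a k b b')"
proof -
  have "(\<Sum>b\<in>B. \<Sum>a\<in>A. \<Sum>b'\<in>B. \<Sum>k\<in>K. f a k b b') = (\<Sum>a\<in>A. \<Sum>b\<in>B. \<Sum>k\<in>K. \<Sum>b'\<in>B. f a k b b')"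
    by (subst sum.swap) (simp add: sum.swap[of _ B K])
  also have "\<dots> = (\<Sum>a\<in>A. \<Sum>k\<in>K. \<Sum>b\<in>B. \<Sum>b'\<in>B. f a k b b')"
    by (simp add: sum.swap[of _ B K])
  finally show ?thesis .
qed

text \<open>The ampliation of \<open>classical_map d c\<close> has Kraus operators \<open>|k\<rangle>\<langle>a| \<otimes> 1\<close> with
  weights \<open>c a k\<close>: its quadratic form at \<open>v\<close> is a weighted sum of quadratic forms of \<open>X\<close>
  at the vectors that move the level-\<open>a\<close> components of \<open>v\<close> to level \<open>k\<close>.\<close>

lemma quad_form_ampliate_classical_map:
  "quad_form (n * d) (ampliate d n (classical_map d c) X) v =
    (\<Sum>a<d. \<Sum>k<d. c a k * quad_form (n * d) X (\<lambda>r. if r mod d = k then v (r div d * d + a) else 0))"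
proof -
  define T where "T a k b b' = cnj (v (b * d + a)) * X $$ (b * d + k, b' * d + k) * v (b' * d + a)"
    for a k b b'
  have X_moved: "quad_form (n * d) X (\<lambda>r. if r mod d = k then v (r div d * d + a) else 0) =
      (\<Sum>b<n. \<Sum>b'<n. T a k b b')" if "k < d" for a k
    using that by (simp add: quad_form_blocks T_def if_distrib if_distribR sum.If_cases)
  have row: "(\<Sum>a'<d. cnj (v (b * d + a)) * ampliate d n (classical_map d c) X $$ (b * d + a, b' * d + a') *
      v (b' * d + a')) = (\<Sum>k<d. c a k * T a k b b')" if "b < n" "a < d" "b' < n" for b a b'
  proof -
    have "(\<Sum>a'<d. cnj (v (b * d + a)) * ampliate d n (classical_map d c) X $$ (b * d + a, b' * d + a') *
        v (b' * d + a')) = (\<Sum>a'<d. if a' = a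
          then cnj (v (b * d + a)) * (\<Sum>k<d. c a k * X $$ (b * d + k, b' * d + k)) * v (b' * d + a)
          else 0)"
      using that by (intro sum.cong refl) (auto simp: index_ampliate_classical_map)
    also have "\<dots> = (\<Sum>k<d. c a k * T a k b b')"
      using that by (simp add: T_def sum_distrib_left sum_distrib_right mult.commute mult.left_commute)
    finally show ?thesis .
  qed
  have "quad_form (n * d) (ampliate d n (classical_map d c) X) v =
      (\<Sum>b<n. \<Sum>a<d. \<Sum>b'<n. \<Sum>k<d. c a k * T a k b b')"
    by (simp add: quad_form_blocks row)
  also have "\<dots> = (\<Sum>a<d. \<Sum>k<d. c a k * (\<Sum>b<n. \<Sum>b'<n. T a k b b'))"
    by (simp add: sum_swap_interleaved sum_distrib_left)
  finally show ?thesis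
    by (simp add: X_moved)
qed

lemma completely_positive_classical_map:
  assumes "\<And>i k. i < d \<Longrightarrow> k < d \<Longrightarrow> 0 \<le> c i k"
  shows "completely_positive d (classical_map d c)"
  unfolding completely_positive_def psd_iff_quad_form_nonneg
proof (intro allI impI conjI)
  fix n X v assume "X \<in> carrier_mat (n * d) (n * d) \<and> (\<forall>v. 0 \<le> quad_form (n * d) X v)"
  then show "0 \<le> quad_form (n * d) (ampliate d n (classical_map d c) X) v"
    unfolding quad_form_ampliate_classical_map
    using assms by (intro sum_nonneg mult_nonneg_nonneg) auto
qed (simp add: ampliate_def)

lemma classical_map_eq_one_mat:
  assumes "\<And>i. i < d \<Longrightarrow> (\<Sum>k<d. c i k) = 1" and "\<And>k. k < d \<Longrightarrow> A $$ (k, k) = 1"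
  shows "classical_map d c A = 1\<^sub>m d"
proof -
  have "classical_map d c A = mat_diag d (\<lambda>_. 1)"
    unfolding classical_map_def using assms by (intro mat_diag_cong) simp
  then show ?thesis
    by simp
qed

definition passivizing_weight :: "nat \<Rightarrow> nat \<Rightarrow> complex" where
  "passivizing_weight i k = (if i \<le> k then 1 / of_nat (Suc k) else 0)"

lemma passivizing_weight_nonneg: "0 \<le> passivizing_weight i k"
  by (simp add: passivizing_weight_def less_eq_complex_def)

lemma passivizing_weight_antimono: "i \<le> j \<Longrightarrow> passivizing_weight j k \<le> passivizing_weight i k"
  by (simp add: passivizing_weight_def less_eq_complex_def)

lemma sum_passivizing_weight:
  assumes "k < d"
  shows "(\<Sum>i<d. passivizing_weight i k) = 1"
proof -
  have "{i \<in> {..<d}. i \<le> k} = {..k}"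
    using assms by auto
  then have "(\<Sum>i<d. passivizing_weight i k) = (\<Sum>i\<le>k. 1 / of_nat (Suc k))"
    unfolding passivizing_weight_def by (simp add: sum.inter_filter[symmetric])
  then show ?thesis
    by (simp del: of_nat_Suc)
qed

lemma trace_preserving_passivizing: "trace_preserving d (classical_map d passivizing_weight)"
  by (simp add: trace_preserving_classical_map sum_passivizing_weight)

lemma quantum_channel_passivizing: "quantum_channel d (classical_map d passivizing_weight)"
  unfolding quantum_channel_def
  by (simp add: linear_map_on_classical_map completely_positive_classical_map
      trace_preserving_passivizing passivizing_weight_nonneg)

lemma passive_states_iff:
  "\<sigma> \<in> passive_states d \<longleftrightarrow> (\<exists>f. \<sigma> = mat_diag d f \<and> (\<forall>i<d. 0 \<le> f i) \<and> (\<Sum>i<d. f i) = 1 \<and>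
     (\<forall>i j. i \<le> j \<longrightarrow> j < d \<longrightarrow> f j \<le> f i))"
proof
  assume "\<sigma> \<in> passive_states d"
  then have psd: "psd d \<sigma>" and tr: "mtrace \<sigma> = 1"
    and off: "\<And>i j. i < d \<Longrightarrow> j < d \<Longrightarrow> i \<noteq> j \<Longrightarrow> \<sigma> $$ (i, j) = 0"
    and mono: "\<And>i j. i \<le> j \<Longrightarrow> j < d \<Longrightarrow> Re (\<sigma> $$ (j, j)) \<le> Re (\<sigma> $$ (i, i))"
    unfolding passive_states_def states_def by auto
  have car: "\<sigma> \<in> carrier_mat d d"
    using psd by (simp add: psd_def)
  have nonneg: "\<forall>i<d. 0 \<le> \<sigma> $$ (i, i)"
    using psd by (simp add: psd_diag_nonneg)
  show "\<exists>f. \<sigma> = mat_diag d f \<and> (\<forall>i<d. 0 \<le> f i) \<and> (\<Sum>i<d. f i) = 1 \<and>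
      (\<forall>i j. i \<le> j \<longrightarrow> j < d \<longrightarrow> f j \<le> f i)"
  proof (intro exI conjI allI impI)
    show "\<sigma> = mat_diag d (\<lambda>i. \<sigma> $$ (i, i))"
      using car off by (rule mat_eq_mat_diag)
    show "(\<Sum>i<d. \<sigma> $$ (i, i)) = 1"
      using car tr by (simp add: mtrace_def)
    show "\<sigma> $$ (j, j) \<le> \<sigma> $$ (i, i)" if "i \<le> j" "j < d" for i j
      using mono[OF that] nonneg that by (simp add: less_eq_complex_def)
  qed (use nonneg in auto)
next
  assume "\<exists>f. \<sigma> = mat_diag d f \<and> (\<forall>i<d. 0 \<le> f i) \<and> (\<Sum>i<d. f i) = 1 \<and>
    (\<forall>i j. i \<le> j \<longrightarrow> j < d \<longrightarrow> f j \<le> f i)"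
  then show "\<sigma> \<in> passive_states d"
    by (auto simp: passive_states_def states_def psd_mat_diag_iff mtrace_mat_diag less_eq_complex_def)
qed

lemma passivizing_image_subset: "classical_map d passivizing_weight ` states d \<subseteq> passive_states d"
proof
  fix \<sigma> assume "\<sigma> \<in> classical_map d passivizing_weight ` states d"
  then obtain \<rho> where "\<rho> \<in> states d" and \<sigma>: "\<sigma> = classical_map d passivizing_weight \<rho>"
    by blast
  then have \<rho>: "psd d \<rho>" "mtrace \<rho> = 1" "\<rho> \<in> carrier_mat d d"
    by (auto simp: states_def psd_def)
  define f where "f i = (\<Sum>k<d. passivizing_weight i k * \<rho> $$ (k, k))" for i
  have "\<sigma> = mat_diag d f"
    unfolding \<sigma> classical_map_def f_def ..
  moreover have "0 \<le> f i" for i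
    unfolding f_def using \<rho>(1)
    by (intro sum_nonneg mult_nonneg_nonneg passivizing_weight_nonneg) (simp add: psd_diag_nonneg)
  moreover have "(\<Sum>i<d. f i) = 1"
  proof -
    have "(\<Sum>i<d. f i) = mtrace \<sigma>"
      by (simp add: \<open>\<sigma> = mat_diag d f\<close> mtrace_mat_diag)
    also have "\<dots> = mtrace \<rho>"
      using trace_preserving_passivizing \<rho>(3) by (simp add: \<sigma> trace_preserving_def)
    finally show ?thesis
      using \<rho>(2) by simp
  qed
  moreover have "f j \<le> f i" if "i \<le> j" for i j
    unfolding f_def using \<rho>(1) that
    by (intro sum_mono mult_right_mono passivizing_weight_antimono) (simp_all add: psd_diag_nonneg)
  ultimately show "\<sigma> \<in> passive_states d"
    unfolding passive_states_iff by blast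
qed

lemma passive_states_subset_passivizing_image:
  "passive_states d \<subseteq> classical_map d passivizing_weight ` states d"
proof
  fix \<sigma> assume "\<sigma> \<in> passive_states d"
  then obtain f where \<sigma>: "\<sigma> = mat_diag d f" and nonneg: "\<forall>i<d. 0 \<le> f i"
    and tr: "(\<Sum>i<d. f i) = 1" and mono: "\<forall>i j. i \<le> j \<longrightarrow> j < d \<longrightarrow> f j \<le> f i"
    unfolding passive_states_iff by blast
  define g where "g k = (if k < d then f k else 0)" for k
  \<comment> \<open>the diagonal preimage: rescaled gaps between consecutive populations\<close>
  define \<rho> where "\<rho> = mat_diag d (\<lambda>k. of_nat (Suc k) * (g k - g (Suc k)))"
  have step: "0 \<le> g k - g (Suc k)" if "k < d" for k
    using that nonneg mono by (simp add: g_def)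
  have P\<rho>: "classical_map d passivizing_weight \<rho> = \<sigma>"
    unfolding \<sigma> classical_map_def
  proof (rule mat_diag_cong)
    fix i assume "i < d"
    have "(\<Sum>k<d. passivizing_weight i k * \<rho> $$ (k, k)) = (\<Sum>k<d. if i \<le> k then g k - g (Suc k) else 0)"
      by (intro sum.cong refl) (simp add: passivizing_weight_def \<rho>_def del: of_nat_Suc)
    also have "\<dots> = (\<Sum>k = i..<d. g k - g (Suc k))"
    proof -
      have "{k \<in> {..<d}. i \<le> k} = {i..<d}"
        by auto
      then show ?thesis
        by (simp add: sum.inter_filter[symmetric])
    qed
    also have "\<dots> = g i - g d"
      using sum_Suc_diff'[of i d "\<lambda>k. - g k"] \<open>i < d\<close> by simp
    finally show "(\<Sum>k<d. passivizing_weight i k * \<rho> $$ (k, k)) = f i"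
      using \<open>i < d\<close> by (simp add: g_def)
  qed
  have "psd d \<rho>"
    unfolding \<rho>_def psd_mat_diag_iff using step by (simp add: less_eq_complex_def)
  moreover have "mtrace \<rho> = 1"
  proof -
    have "mtrace \<rho> = mtrace (classical_map d passivizing_weight \<rho>)"
      using trace_preserving_passivizing by (simp add: trace_preserving_def \<rho>_def)
    then show ?thesis
      using P\<rho> tr by (simp add: \<sigma> mtrace_mat_diag)
  qed
  ultimately show "\<sigma> \<in> classical_map d passivizing_weight ` states d"
    using P\<rho> by (auto simp: states_def)
qed

lemma passivizing_image_states: "classical_map d passivizing_weight ` states d = passive_states d"
  using passivizing_image_subset passive_states_subset_passivizing_image by (rule equalityI)

definition uniform_state :: "nat \<Rightarrow> nat \<Rightarrow> complex mat" where
  "uniform_state d k = mat_diag d (\<lambda>i. passivizing_weight i k)"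

lemma uniform_state_passive: "k < d \<Longrightarrow> uniform_state d k \<in> passive_states d"
  unfolding passive_states_iff uniform_state_def
  by (intro exI[of _ "\<lambda>i. passivizing_weight i k"])
    (simp add: passivizing_weight_nonneg sum_passivizing_weight passivizing_weight_antimono)

lemma mtrace_mult_uniform_state:
  assumes "A \<in> carrier_mat d d" and "k < d"
  shows "mtrace (A * uniform_state d k) = (\<Sum>i\<le>k. A $$ (i, i)) / of_nat (Suc k)"
proof -
  have "mtrace (A * uniform_state d k) = (\<Sum>i<d. if i \<le> k then A $$ (i, i) / of_nat (Suc k) else 0)"
    using assms(1) unfolding uniform_state_def
    by (simp add: mtrace_mult_mat_diag) (intro sum.cong; simp add: passivizing_weight_def)
  also have "\<dots> = (\<Sum>i\<le>k. A $$ (i, i) / of_nat (Suc k))"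
  proof -
    have "{i \<in> {..<d}. i \<le> k} = {..k}"
      using assms(2) by auto
    then show ?thesis
      by (simp add: sum.inter_filter[symmetric])
  qed
  finally show ?thesis
    by (simp add: sum_divide_distrib)
qed

lemma eq_one_if_partial_sums:
  fixes f :: "nat \<Rightarrow> 'a::ring_1"
  assumes "\<And>k. k < d \<Longrightarrow> (\<Sum>i\<le>k. f i) = of_nat (Suc k)" and "i < d"
  shows "f i = 1"
proof (cases i)
  case 0
  then show ?thesis
    using assms(1)[of 0] assms(2) by simp
next
  case (Suc m)
  then show ?thesis
    using assms(1)[of m] assms(1)[of i] assms(2) by simp
qed

lemma diag_eq_one_if_adjoint_eq_one_mat:
  assumes "P ` states d = passive_states d" and "is_adjoint d P Q" and "Q \<xi> = 1\<^sub>m d"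
    and "\<xi> \<in> carrier_mat d d" and "i < d"
  shows "\<xi> $$ (i, i) = 1"
  using _ \<open>i < d\<close>
proof (rule eq_one_if_partial_sums)
  fix k assume "k < d"
  then obtain \<rho> where "\<rho> \<in> states d" and P\<rho>: "P \<rho> = uniform_state d k"
    using uniform_state_passive assms(1) by (metis imageE)
  then have \<rho>: "\<rho> \<in> carrier_mat d d" "mtrace \<rho> = 1"
    by (auto simp: states_def psd_def)
  have "(\<Sum>i\<le>k. \<xi> $$ (i, i)) / of_nat (Suc k) = mtrace (\<xi> * P \<rho>)"
    using assms(4) \<open>k < d\<close> by (simp add: P\<rho> mtrace_mult_uniform_state)
  also have "\<dots> = mtrace (Q \<xi> * \<rho>)"
    using assms(2,4) \<rho>(1) by (simp add: is_adjoint_def)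
  also have "\<dots> = 1"
    using assms(3) \<rho> by simp
  finally show "(\<Sum>i\<le>k. \<xi> $$ (i, i)) = of_nat (Suc k)"
    by (simp add: divide_eq_eq del: of_nat_Suc)
qed

theorem mainTheorem7:
  fixes d :: nat and \<xi> :: "complex mat"
  assumes "0 < d"
    and "psd d \<xi>"
  shows "correlation_matrix d \<xi> \<longleftrightarrow>
    (\<exists>P Q. quantum_channel d P \<and> P ` states d = passive_states d \<and>
           is_adjoint d P Q \<and> Q \<xi> = 1\<^sub>m d)"
proof
  assume "correlation_matrix d \<xi>"
  then have "classical_map d (\<lambda>i k. passivizing_weight k i) \<xi> = 1\<^sub>m d"
    by (intro classical_map_eq_one_mat) (simp_all add: correlation_matrix_def sum_passivizing_weight)
  then show "\<exists>P Q. quantum_channel d P \<and> P ` states d = passive_states d \<and>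
      is_adjoint d P Q \<and> Q \<xi> = 1\<^sub>m d"
    using quantum_channel_passivizing passivizing_image_states is_adjoint_classical_map by blast
next
  assume "\<exists>P Q. quantum_channel d P \<and> P ` states d = passive_states d \<and>
    is_adjoint d P Q \<and> Q \<xi> = 1\<^sub>m d"
  then have "\<xi> $$ (i, i) = 1" if "i < d" for i
    using diag_eq_one_if_adjoint_eq_one_mat assms(2) that by (metis psd_def)
  then show "correlation_matrix d \<xi>"
    using assms(2) by (simp add: correlation_matrix_def)
qed

end
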